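(* Let $w_1,\dots,w_r\in\mathbb{R}^N$ be pairwise distinct points and let $f(x)=\sum_{k=1}^r\log|x-w_k|^2$, viewed as a function $\mathbb{R}^N\to\mathbb{R}\cup\{-\infty\}$ (with $f(w_k)=-\infty$). (1) Let $\Omega\subset\mathbb{R}^N$ be a bounded domain with $w_k\notin\partial\Omega$ for all $k$. Then every point of $\bar\Omega$ at which $f|_{\bar\Omega}$ attains its maximum lies in $\partial\Omega$. (2) Suppose moreover that the convex hull $\mathrm{Conv}(\{w_1,\dots,w_r\})$ has nonempty interior and $\bar\Omega=\mathrm{Conv}(\{w_1,\dots,w_r\})$. Then no point at which $f|_{\bar\Omega}$ attains its maximum lies in the relative interior of a face of the polytope $\bar\Omega$ of dimension at least $2$; equivalently, all maximum points lie on one-dimensional faces (edges) of $\bar\Omega$.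
   Context: $|\cdot|$ is the Euclidean norm on $\mathbb{R}^N$. *)

theory Defs
  imports "HOL-Analysis.Analysis"
begin

definition logpot :: "'a::euclidean_space set \<Rightarrow> 'a \<Rightarrow> ereal" where
  "logpot W x = (if x \<in> W then -\<infinity> else ereal (\<Sum>w\<in>W. ln ((norm (x - w))\<^sup>2)))"

definition is_max_point :: "('a \<Rightarrow> ereal) \<Rightarrow> 'a set \<Rightarrow> 'a \<Rightarrow> bool" where
  "is_max_point g S x \<longleftrightarrow> x \<in> S \<and> (\<forall>y\<in>S. g y \<le> g x)"

definition bounded_domain :: "'a::euclidean_space set \<Rightarrow> bool" where
  "bounded_domain \<Omega> \<longleftrightarrow> \<Omega> \<noteq> {} \<and> open \<Omega> \<and> connected \<Omega> \<and> bounded \<Omega>"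

end

theory Submission
  imports Defs "HOL-Complex_Analysis.Conformal_Mappings"
begin

text \<open>If \<open>x \<notin> W\<close> is the centre of a disc of a 2-plane \<open>x + span {u\<^sub>1, u\<^sub>2}\<close> contained
  in a set, then \<open>f\<close> restricted to that set has no maximum at \<open>x\<close>. On the plane each term of
  \<open>f\<close> is \<open>log (|z - p|\<^sup>2 + h\<^sup>2)\<close>, which is subharmonic, and strictly so when the height \<open>h\<close> of
  the pole above the plane is positive. So if some pole is off the plane, the sum of \<open>f\<close>
  over the four points \<open>x \<plusminus> e u\<^sub>i\<close> exceeds \<open>4 f(x)\<close> for small \<open>e > 0\<close>. If all poles lie
  in the plane, identify it with \<open>\<complex>\<close>: then \<open>f = log |P|\<^sup>2\<close> for a nonconstant polynomial
  \<open>P\<close>, and the maximum modulus principle applies. Such a disc exists around every point of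
  the relative interior of a set of dimension at least 2. For (2), every point of the
  polytope lies in the relative interior of some face, and a 0-dimensional face is a
  vertex, hence a pole, where \<open>f = -\<infinity>\<close>.\<close>

definition logpot_real :: "'a::real_normed_vector set \<Rightarrow> 'a \<Rightarrow> real" where
  "logpot_real W y = (\<Sum>w\<in>W. ln ((norm (y - w))\<^sup>2))"

lemma logpot_eq_logpot_real: "y \<notin> W \<Longrightarrow> logpot W y = ereal (logpot_real W y)"
  by (simp add: logpot_def logpot_real_def)

lemma ln_norm_add_sq_plus_ln_norm_diff_sq:
  fixes u x w :: "'a::real_inner"
  assumes u: "norm u = 1" and e: "0 \<le> e" "e < norm (x - w)"
  shows "ln ((norm (x + e *\<^sub>R u - w))\<^sup>2) + ln ((norm (x - e *\<^sub>R u - w))\<^sup>2)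
       = ln (((norm (x - w))\<^sup>2 + e\<^sup>2)\<^sup>2 - 4 * e\<^sup>2 * (inner u (x - w))\<^sup>2)"
proof -
  define v where "v = x - w"
  have uu: "inner u u = 1" using u by (simp add: power2_norm_eq_inner[symmetric])
  have shift: "x + e *\<^sub>R u - w = v + e *\<^sub>R u" "x - e *\<^sub>R u - w = v - e *\<^sub>R u"
    by (simp_all add: v_def algebra_simps)
  have plus: "(norm (v + e *\<^sub>R u))\<^sup>2 = (norm v)\<^sup>2 + 2 * e * inner u v + e\<^sup>2"
    by (simp only: power2_norm_eq_inner)
      (simp add: inner_add_left inner_add_right uu inner_commute power2_eq_square algebra_simps)
  have minus: "(norm (v - e *\<^sub>R u))\<^sup>2 = (norm v)\<^sup>2 - 2 * e * inner u v + e\<^sup>2"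
    by (simp only: power2_norm_eq_inner)
      (simp add: inner_diff_left inner_diff_right uu inner_commute power2_eq_square algebra_simps)
  have "norm v \<le> norm (v + e *\<^sub>R u) + e" "norm v \<le> norm (v - e *\<^sub>R u) + e"
    using norm_triangle_ineq4[of "v + e *\<^sub>R u" "e *\<^sub>R u"] norm_triangle_ineq[of "v - e *\<^sub>R u" "e *\<^sub>R u"]
    by (simp_all add: u e(1))
  moreover have "e < norm v" using e(2) by (simp add: v_def)
  ultimately have "norm (v + e *\<^sub>R u) > 0" "norm (v - e *\<^sub>R u) > 0" by linarith+
  then have "ln ((norm (v + e *\<^sub>R u))\<^sup>2) + ln ((norm (v - e *\<^sub>R u))\<^sup>2)
      = ln ((norm (v + e *\<^sub>R u))\<^sup>2 * (norm (v - e *\<^sub>R u))\<^sup>2)"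
    by (simp add: ln_mult)
  also have "\<dots> = ln (((norm v)\<^sup>2 + e\<^sup>2)\<^sup>2 - 4 * e\<^sup>2 * (inner u v)\<^sup>2)"
    unfolding plus minus by (simp add: power2_eq_square algebra_simps)
  finally show ?thesis unfolding shift v_def .
qed

lemma DERIV_ln_quadratic_at_0:
  fixes A b :: real
  assumes "A > 0"
  shows "((\<lambda>s. ln ((A + s)\<^sup>2 - 4 * s * b\<^sup>2)) has_real_derivative (2 * A - 4 * b\<^sup>2) / A\<^sup>2) (at 0)"
proof -
  have inner: "((\<lambda>s. (A + s)\<^sup>2 - 4 * s * b\<^sup>2) has_real_derivative 2 * A - 4 * b\<^sup>2) (at 0)"
    by (rule derivative_eq_intros refl | simp)+
  have "(ln has_real_derivative 1 / A\<^sup>2) (at ((A + 0)\<^sup>2 - 4 * 0 * b\<^sup>2))"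
    using DERIV_ln_divide[of "A\<^sup>2"] assms by simp
  from DERIV_chain2[OF this inner] show ?thesis by simp
qed

locale orthonormal_pair =
  fixes u\<^sub>1 u\<^sub>2 :: "'a::euclidean_space"
  assumes norm_u\<^sub>1: "norm u\<^sub>1 = 1" and norm_u\<^sub>2: "norm u\<^sub>2 = 1" and inner_u\<^sub>1_u\<^sub>2: "inner u\<^sub>1 u\<^sub>2 = 0"
begin

definition proj :: "'a \<Rightarrow> 'a" where
  "proj v = inner u\<^sub>1 v *\<^sub>R u\<^sub>1 + inner u\<^sub>2 v *\<^sub>R u\<^sub>2"

lemma norm_plane_sq: "(norm (a *\<^sub>R u\<^sub>1 + b *\<^sub>R u\<^sub>2))\<^sup>2 = a\<^sup>2 + b\<^sup>2"
proof -
  have "inner u\<^sub>1 u\<^sub>1 = 1" "inner u\<^sub>2 u\<^sub>2 = 1"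
    using norm_u\<^sub>1 norm_u\<^sub>2 by (simp_all add: power2_norm_eq_inner[symmetric])
  then show ?thesis using inner_u\<^sub>1_u\<^sub>2
    by (simp only: power2_norm_eq_inner)
      (simp add: inner_add_left inner_add_right inner_commute power2_eq_square)
qed

lemma inner_plane:
  shows "inner u\<^sub>1 (a *\<^sub>R u\<^sub>1 + b *\<^sub>R u\<^sub>2) = a" and "inner u\<^sub>2 (a *\<^sub>R u\<^sub>1 + b *\<^sub>R u\<^sub>2) = b"
proof -
  have "inner u\<^sub>1 u\<^sub>1 = 1" "inner u\<^sub>2 u\<^sub>2 = 1"
    using norm_u\<^sub>1 norm_u\<^sub>2 by (simp_all add: power2_norm_eq_inner[symmetric])
  then show "inner u\<^sub>1 (a *\<^sub>R u\<^sub>1 + b *\<^sub>R u\<^sub>2) = a" "inner u\<^sub>2 (a *\<^sub>R u\<^sub>1 + b *\<^sub>R u\<^sub>2) = b"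
    using inner_u\<^sub>1_u\<^sub>2 by (simp_all add: inner_add_right inner_commute)
qed

lemma norm_sq_eq_proj: "(norm v)\<^sup>2 = (inner u\<^sub>1 v)\<^sup>2 + (inner u\<^sub>2 v)\<^sup>2 + (norm (v - proj v))\<^sup>2"
proof -
  have "inner u\<^sub>1 u\<^sub>1 = 1" "inner u\<^sub>2 u\<^sub>2 = 1"
    using norm_u\<^sub>1 norm_u\<^sub>2 by (simp_all add: power2_norm_eq_inner[symmetric])
  then show ?thesis using inner_u\<^sub>1_u\<^sub>2
    by (simp only: proj_def power2_norm_eq_inner)
      (simp add: inner_add_left inner_add_right inner_diff_left inner_diff_right inner_commute
        power2_eq_square algebra_simps)
qed

text \<open>At \<open>s = e\<^sup>2\<close> this is the sum of \<open>f\<close> over \<open>x \<plusminus> e u\<^sub>1, x \<plusminus> e u\<^sub>2\<close>, and at \<open>s = 0\<close> it is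
  \<open>4 f(x)\<close>; its derivative at \<open>0\<close> is positive unless all poles lie in the plane.\<close>

definition pm_logpot :: "'a set \<Rightarrow> 'a \<Rightarrow> real \<Rightarrow> real" where
  "pm_logpot W x s = (\<Sum>w\<in>W. ln (((norm (x - w))\<^sup>2 + s)\<^sup>2 - 4 * s * (inner u\<^sub>1 (x - w))\<^sup>2)
     + ln (((norm (x - w))\<^sup>2 + s)\<^sup>2 - 4 * s * (inner u\<^sub>2 (x - w))\<^sup>2))"

lemma pm_logpot_0:
  assumes "x \<notin> W"
  shows "pm_logpot W x 0 = 4 * logpot_real W x"
proof -
  have "(norm (x - w))\<^sup>2 > 0" if "w \<in> W" for w using assms that by auto
  then show ?thesis
    unfolding pm_logpot_def logpot_real_def sum_distrib_left
    by (intro sum.cong refl) (simp add: ln_realpow)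
qed

lemma pm_logpot_sq:
  assumes "0 \<le> e" and "\<And>w. w \<in> W \<Longrightarrow> e < norm (x - w)"
  shows "pm_logpot W x (e\<^sup>2) = logpot_real W (x + e *\<^sub>R u\<^sub>1) + logpot_real W (x - e *\<^sub>R u\<^sub>1)
    + logpot_real W (x + e *\<^sub>R u\<^sub>2) + logpot_real W (x - e *\<^sub>R u\<^sub>2)"
proof -
  have "pm_logpot W x (e\<^sup>2) = (\<Sum>w\<in>W. ln ((norm (x + e *\<^sub>R u\<^sub>1 - w))\<^sup>2)
      + ln ((norm (x - e *\<^sub>R u\<^sub>1 - w))\<^sup>2) + (ln ((norm (x + e *\<^sub>R u\<^sub>2 - w))\<^sup>2)
      + ln ((norm (x - e *\<^sub>R u\<^sub>2 - w))\<^sup>2)))"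
    unfolding pm_logpot_def
  proof (rule sum.cong)
    fix w assume "w \<in> W"
    then show "ln (((norm (x - w))\<^sup>2 + e\<^sup>2)\<^sup>2 - 4 * e\<^sup>2 * (inner u\<^sub>1 (x - w))\<^sup>2)
        + ln (((norm (x - w))\<^sup>2 + e\<^sup>2)\<^sup>2 - 4 * e\<^sup>2 * (inner u\<^sub>2 (x - w))\<^sup>2)
      = ln ((norm (x + e *\<^sub>R u\<^sub>1 - w))\<^sup>2) + ln ((norm (x - e *\<^sub>R u\<^sub>1 - w))\<^sup>2)
        + (ln ((norm (x + e *\<^sub>R u\<^sub>2 - w))\<^sup>2) + ln ((norm (x - e *\<^sub>R u\<^sub>2 - w))\<^sup>2))"
      using ln_norm_add_sq_plus_ln_norm_diff_sq[OF norm_u\<^sub>1 assms(1)]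
        ln_norm_add_sq_plus_ln_norm_diff_sq[OF norm_u\<^sub>2 assms(1)] assms(2)
      by presburger
  qed simp
  then show ?thesis by (simp add: logpot_real_def sum.distrib add.assoc)
qed

lemma pm_logpot_deriv:
  assumes "x \<notin> W"
  shows "(pm_logpot W x has_real_derivative
    (\<Sum>w\<in>W. 4 * (norm ((x - w) - proj (x - w)))\<^sup>2 / ((norm (x - w))\<^sup>2)\<^sup>2)) (at 0)"
  unfolding pm_logpot_def
proof (rule DERIV_sum)
  fix w assume "w \<in> W"
  define A where "A = (norm (x - w))\<^sup>2"
  have "A > 0" using assms \<open>w \<in> W\<close> by (auto simp: A_def)
  then have "((\<lambda>s. ln ((A + s)\<^sup>2 - 4 * s * (inner u\<^sub>1 (x - w))\<^sup>2)
      + ln ((A + s)\<^sup>2 - 4 * s * (inner u\<^sub>2 (x - w))\<^sup>2)) has_real_derivative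
      (2 * A - 4 * (inner u\<^sub>1 (x - w))\<^sup>2) / A\<^sup>2 + (2 * A - 4 * (inner u\<^sub>2 (x - w))\<^sup>2) / A\<^sup>2) (at 0)"
    by (intro DERIV_add DERIV_ln_quadratic_at_0)
  moreover have "A = (inner u\<^sub>1 (x - w))\<^sup>2 + (inner u\<^sub>2 (x - w))\<^sup>2 + (norm ((x - w) - proj (x - w)))\<^sup>2"
    unfolding A_def by (rule norm_sq_eq_proj)
  ultimately show "((\<lambda>s. ln (((norm (x - w))\<^sup>2 + s)\<^sup>2 - 4 * s * (inner u\<^sub>1 (x - w))\<^sup>2)
      + ln (((norm (x - w))\<^sup>2 + s)\<^sup>2 - 4 * s * (inner u\<^sub>2 (x - w))\<^sup>2)) has_real_derivative
      4 * (norm ((x - w) - proj (x - w)))\<^sup>2 / ((norm (x - w))\<^sup>2)\<^sup>2) (at 0)"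
    unfolding A_def[symmetric] by (simp add: add_divide_distrib[symmetric])
qed

lemma logpot_increase_off_plane:
  fixes W :: "'a set"
  assumes finW: "finite W" and xW: "x \<notin> W"
    and off: "w\<^sub>0 \<in> W" "\<And>a b. w\<^sub>0 \<noteq> x + a *\<^sub>R u\<^sub>1 + b *\<^sub>R u\<^sub>2"
    and r: "r > 0" and disc: "\<And>a b. a\<^sup>2 + b\<^sup>2 < r\<^sup>2 \<Longrightarrow> x + a *\<^sub>R u\<^sub>1 + b *\<^sub>R u\<^sub>2 \<in> T"
  shows "\<exists>y\<in>T. logpot W x < logpot W y"
proof -
  define D where "D w = 4 * (norm ((x - w) - proj (x - w)))\<^sup>2 / ((norm (x - w))\<^sup>2)\<^sup>2" for w
  have "x - w\<^sub>0 \<noteq> proj (x - w\<^sub>0)"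
  proof
    assume "x - w\<^sub>0 = proj (x - w\<^sub>0)"
    then have "w\<^sub>0 = x + (- inner u\<^sub>1 (x - w\<^sub>0)) *\<^sub>R u\<^sub>1 + (- inner u\<^sub>2 (x - w\<^sub>0)) *\<^sub>R u\<^sub>2"
      by (simp add: proj_def algebra_simps)
    with off(2) show False by blast
  qed
  moreover have "x \<noteq> w\<^sub>0" using xW off(1) by blast
  ultimately have "D w\<^sub>0 > 0" unfolding D_def by (intro divide_pos_pos) auto
  then have "sum D W > 0" using finW off(1) by (intro sum_pos2) (auto simp: D_def)
  then obtain d where d: "d > 0" "\<And>h. 0 < h \<Longrightarrow> h < d \<Longrightarrow> pm_logpot W x 0 < pm_logpot W x h"
    using DERIV_pos_inc_right[OF pm_logpot_deriv[OF xW]] unfolding D_def by fastforce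
  obtain m where m: "m > 0" "\<And>w. w \<in> W \<Longrightarrow> m \<le> norm (x - w)"
    using finite_set_avoid[OF finW, of x] xW by (metis dist_norm)
  define e where "e = min (r / 2) (min (m / 2) (sqrt d / 2))"
  have e: "0 < e" "e < r" "e < m" "e\<^sup>2 < d"
  proof -
    show "0 < e" "e < r" "e < m" using r m d by (auto simp: e_def)
    have "e \<le> sqrt d / 2" by (simp add: e_def)
    then have "e\<^sup>2 \<le> (sqrt d / 2)\<^sup>2" using \<open>0 < e\<close> by (intro power_mono) auto
    then show "e\<^sup>2 < d" using d by (simp add: power_divide)
  qed
  have "e < norm (x - w)" if "w \<in> W" for w using e(3) m(2)[OF that] by simp
  then have sum4: "4 * logpot_real W x < logpot_real W (x + e *\<^sub>R u\<^sub>1) + logpot_real W (x - e *\<^sub>R u\<^sub>1)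
      + logpot_real W (x + e *\<^sub>R u\<^sub>2) + logpot_real W (x - e *\<^sub>R u\<^sub>2)"
    using d(2)[of "e\<^sup>2"] e pm_logpot_0[OF xW] pm_logpot_sq[of e] by simp
  have "\<exists>y\<in>{x + e *\<^sub>R u\<^sub>1, x - e *\<^sub>R u\<^sub>1, x + e *\<^sub>R u\<^sub>2, x - e *\<^sub>R u\<^sub>2}.
      logpot_real W x < logpot_real W y"
  proof (rule ccontr)
    assume "\<not> ?thesis"
    then show False using sum4 by (auto simp: not_less)
  qed
  then obtain y where y: "y \<in> {x + e *\<^sub>R u\<^sub>1, x - e *\<^sub>R u\<^sub>1, x + e *\<^sub>R u\<^sub>2, x - e *\<^sub>R u\<^sub>2}"
    and less: "logpot_real W x < logpot_real W y"
    by blast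
  have "e\<^sup>2 < r\<^sup>2" using e(1,2) by (intro power_strict_mono) auto
  then have "x + e *\<^sub>R u\<^sub>1 \<in> T" "x - e *\<^sub>R u\<^sub>1 \<in> T" "x + e *\<^sub>R u\<^sub>2 \<in> T" "x - e *\<^sub>R u\<^sub>2 \<in> T"
    using disc[of e 0] disc[of "-e" 0] disc[of 0 e] disc[of 0 "-e"] by simp_all
  then have "y \<in> T" using y by blast
  moreover have "y \<notin> W"
  proof
    assume "y \<in> W"
    then have "m \<le> norm (x - y)" by (rule m(2))
    moreover have "norm (x - y) = e" using y e(1) norm_u\<^sub>1 norm_u\<^sub>2 by auto
    ultimately show False using e(3) by simp
  qed
  ultimately show ?thesis using less xW by (auto simp: logpot_eq_logpot_real intro!: bexI[of _ y])
qed

definition plane_point :: "'a \<Rightarrow> complex \<Rightarrow> 'a" where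
  "plane_point x z = x + Re z *\<^sub>R u\<^sub>1 + Im z *\<^sub>R u\<^sub>2"

definition plane_coord :: "'a \<Rightarrow> 'a \<Rightarrow> complex" where
  "plane_coord x w = Complex (inner u\<^sub>1 (w - x)) (inner u\<^sub>2 (w - x))"

lemma norm_plane_point_diff:
  assumes "w = x + a *\<^sub>R u\<^sub>1 + b *\<^sub>R u\<^sub>2"
  shows "norm (plane_point x z - w) = cmod (z - plane_coord x w)"
proof -
  have "plane_coord x w = Complex a b"
    using assms by (simp add: plane_coord_def inner_plane)
  moreover have "plane_point x z - w = (Re z - a) *\<^sub>R u\<^sub>1 + (Im z - b) *\<^sub>R u\<^sub>2"
    using assms by (simp add: plane_point_def algebra_simps)
  ultimately have "(norm (plane_point x z - w))\<^sup>2 = (cmod (z - plane_coord x w))\<^sup>2"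
    by (simp add: norm_plane_sq cmod_power2)
  then show ?thesis by (simp add: power2_eq_iff_nonneg)
qed

lemma logpot_plane_point:
  fixes W :: "'a set"
  assumes finW: "finite W" and plane: "\<And>w. w \<in> W \<Longrightarrow> \<exists>a b. w = x + a *\<^sub>R u\<^sub>1 + b *\<^sub>R u\<^sub>2"
  defines "P \<equiv> \<lambda>z. \<Prod>w\<in>W. z - plane_coord x w"
  shows plane_point_in_iff: "plane_point x z \<in> W \<longleftrightarrow> P z = 0"
    and logpot_plane_point_eq: "P z \<noteq> 0 \<Longrightarrow> logpot W (plane_point x z) = ereal (ln ((cmod (P z))\<^sup>2))"
proof -
  have norm_eq: "norm (plane_point x z - w) = cmod (z - plane_coord x w)" if "w \<in> W" for w
    using plane[OF that] norm_plane_point_diff by blast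
  have "plane_point x z \<in> W \<longleftrightarrow> (\<exists>w\<in>W. plane_point x z = w)" by blast
  also have "\<dots> \<longleftrightarrow> (\<exists>w\<in>W. z = plane_coord x w)"
    by (rule bex_cong[OF refl]) (metis norm_eq eq_iff_diff_eq_0 norm_eq_zero)
  also have "\<dots> \<longleftrightarrow> P z = 0" using finW by (simp add: P_def)
  finally show in_iff: "plane_point x z \<in> W \<longleftrightarrow> P z = 0" .
  assume "P z \<noteq> 0"
  have "logpot_real W (plane_point x z) = (\<Sum>w\<in>W. ln ((cmod (z - plane_coord x w))\<^sup>2))"
    unfolding logpot_real_def by (intro sum.cong refl) (simp add: norm_eq)
  also have "\<dots> = ln ((cmod (P z))\<^sup>2)"
    using \<open>P z \<noteq> 0\<close> finW by (simp add: P_def ln_prod prod_norm[symmetric] prod_power_distrib)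
  finally show "logpot W (plane_point x z) = ereal (ln ((cmod (P z))\<^sup>2))"
    using in_iff \<open>P z \<noteq> 0\<close> by (simp add: logpot_eq_logpot_real)
qed

lemma logpot_increase_in_plane:
  fixes W :: "'a set"
  assumes finW: "finite W" and neW: "W \<noteq> {}" and xW: "x \<notin> W"
    and plane: "\<And>w. w \<in> W \<Longrightarrow> \<exists>a b. w = x + a *\<^sub>R u\<^sub>1 + b *\<^sub>R u\<^sub>2"
    and r: "r > 0" and disc: "\<And>a b. a\<^sup>2 + b\<^sup>2 < r\<^sup>2 \<Longrightarrow> x + a *\<^sub>R u\<^sub>1 + b *\<^sub>R u\<^sub>2 \<in> T"
  shows "\<exists>y\<in>T. logpot W x < logpot W y"
proof (rule ccontr)
  assume "\<not> ?thesis"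
  then have max: "\<And>y. y \<in> T \<Longrightarrow> logpot W y \<le> logpot W x" by (auto simp: not_less)
  define P where "P z = (\<Prod>w\<in>W. z - plane_coord x w)" for z
  note in_iff = plane_point_in_iff[OF finW plane, folded P_def]
  note logpot_eq = logpot_plane_point_eq[OF finW plane, folded P_def]
  have "plane_point x 0 = x" by (simp add: plane_point_def)
  then have P0: "P 0 \<noteq> 0" using in_iff xW by metis
  have bound: "cmod (P z) \<le> cmod (P 0)" if "z \<in> ball 0 r" for z
  proof (cases "P z = 0")
    case False
    have "(Re z)\<^sup>2 + (Im z)\<^sup>2 < r\<^sup>2"
      using that r by (simp add: cmod_power2[symmetric] power_strict_mono)
    then have "logpot W (plane_point x z) \<le> logpot W (plane_point x 0)"
      using max disc \<open>plane_point x 0 = x\<close> by (simp add: plane_point_def)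
    then have "(cmod (P z))\<^sup>2 \<le> (cmod (P 0))\<^sup>2" using False P0 by (simp add: logpot_eq)
    then show ?thesis by (simp add: power2_le_iff_abs_le)
  qed simp
  have "P holomorphic_on UNIV" unfolding P_def by (intro holomorphic_intros)
  then have "P constant_on UNIV"
    by (rule maximum_modulus_principle[where U = "ball 0 r" and \<xi> = 0]) (use r bound in auto)
  moreover obtain w where "w \<in> W" using neW by blast
  then have "P (plane_coord x w) = 0" using finW by (auto simp: P_def)
  ultimately show False using P0 by (auto simp: constant_on_def)
qed

lemma logpot_increase_in_disc:
  fixes W :: "'a set"
  assumes W: "finite W" "W \<noteq> {}" and xW: "x \<notin> W"
    and disc: "r > 0" "\<And>a b. a\<^sup>2 + b\<^sup>2 < r\<^sup>2 \<Longrightarrow> x + a *\<^sub>R u\<^sub>1 + b *\<^sub>R u\<^sub>2 \<in> T"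
  shows "\<exists>y\<in>T. logpot W x < logpot W y"
proof (cases "\<forall>w\<in>W. \<exists>a b. w = x + a *\<^sub>R u\<^sub>1 + b *\<^sub>R u\<^sub>2")
  case True
  then show ?thesis by (intro logpot_increase_in_plane[OF W xW _ disc]) blast
next
  case False
  then obtain w\<^sub>0 where "w\<^sub>0 \<in> W" "\<And>a b. w\<^sub>0 \<noteq> x + a *\<^sub>R u\<^sub>1 + b *\<^sub>R u\<^sub>2" by blast
  then show ?thesis by (intro logpot_increase_off_plane[OF W(1) xW _ _ disc])
qed

end

lemma subspace_obtain_orthonormal_pair:
  fixes L :: "'a::euclidean_space set"
  assumes "subspace L" and "dim L \<ge> 2"
  obtains u\<^sub>1 u\<^sub>2 where "u\<^sub>1 \<in> L" "u\<^sub>2 \<in> L" "orthonormal_pair u\<^sub>1 u\<^sub>2"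
proof -
  obtain U where U: "U \<subseteq> L" "pairwise orthogonal U" "\<And>u. u \<in> U \<Longrightarrow> norm u = 1"
    "independent U" "card U = dim L" "span U = L"
    using orthonormal_basis_subspace[OF assms(1)] by blast
  have "2 \<le> card U" using U(5) assms(2) by simp
  then obtain V where "V \<subseteq> U" "card V = 2" by (rule obtain_subset_with_card_n)
  then obtain u\<^sub>1 u\<^sub>2 where u: "u\<^sub>1 \<in> U" "u\<^sub>2 \<in> U" "u\<^sub>1 \<noteq> u\<^sub>2"
    by (auto simp: card_2_iff)
  have "orthonormal_pair u\<^sub>1 u\<^sub>2"
  proof
    show "norm u\<^sub>1 = 1" "norm u\<^sub>2 = 1" using U(3) u by simp_all
    show "inner u\<^sub>1 u\<^sub>2 = 0" using U(2) u unfolding pairwise_def orthogonal_def by blast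
  qed
  with U(1) u show ?thesis using that by blast
qed

lemma logpot_increase_in_rel_interior:
  fixes W S :: "'a::euclidean_space set"
  assumes W: "finite W" "W \<noteq> {}" and xW: "x \<notin> W"
    and x: "x \<in> rel_interior S" and dim: "aff_dim S \<ge> 2"
  shows "\<exists>y\<in>S. logpot W x < logpot W y"
proof -
  obtain e where e: "e > 0" "ball x e \<inter> affine hull S \<subseteq> S" and "x \<in> S"
    using x by (auto simp: mem_rel_interior_ball)
  define L where "L = span ((\<lambda>y. - x + y) ` (S - {x}))"
  have aff: "affine hull S = (\<lambda>y. x + y) ` L"
    unfolding L_def by (rule affine_hull_span2[OF \<open>x \<in> S\<close>])
  have "aff_dim S = int (dim ((+) (- x) ` S))"
    by (rule aff_dim_eq_dim) (simp add: hull_inc \<open>x \<in> S\<close>)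
  also have "(+) (- x) ` S = insert 0 ((\<lambda>y. - x + y) ` (S - {x}))"
    using \<open>x \<in> S\<close> by auto
  also have "dim \<dots> = dim L"
    unfolding L_def by (metis dim_span span_insert_0)
  finally have "dim L \<ge> 2" using dim by simp
  moreover have "subspace L" unfolding L_def by (rule subspace_span)
  ultimately obtain u\<^sub>1 u\<^sub>2 where u: "u\<^sub>1 \<in> L" "u\<^sub>2 \<in> L" and orth: "orthonormal_pair u\<^sub>1 u\<^sub>2"
    by (metis subspace_obtain_orthonormal_pair)
  interpret orthonormal_pair u\<^sub>1 u\<^sub>2 by (rule orth)
  show ?thesis
  proof (rule logpot_increase_in_disc[OF W xW e(1)])
    fix a b :: real
    assume "a\<^sup>2 + b\<^sup>2 < e\<^sup>2"
    define v where "v = a *\<^sub>R u\<^sub>1 + b *\<^sub>R u\<^sub>2"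
    have "(norm v)\<^sup>2 < e\<^sup>2" using \<open>a\<^sup>2 + b\<^sup>2 < e\<^sup>2\<close> by (simp add: v_def norm_plane_sq)
    then have "dist x (x + v) < e" using e(1) by (simp add: dist_norm power_less_imp_less_base)
    moreover have "v \<in> L" using u unfolding v_def L_def by (intro span_add span_scale)
    ultimately have "x + (a *\<^sub>R u\<^sub>1 + b *\<^sub>R u\<^sub>2) \<in> ball x e \<inter> affine hull S"
      by (simp add: aff v_def)
    then show "x + a *\<^sub>R u\<^sub>1 + b *\<^sub>R u\<^sub>2 \<in> S" using e(2) by (auto simp: add.assoc)
  qed
qed

lemma is_max_point_logpot_notin:
  assumes "is_max_point (logpot W) S x" and "finite W" and "infinite S"
  shows "x \<notin> W"
proof
  assume "x \<in> W"
  have "S \<subseteq> W"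
  proof
    fix y assume "y \<in> S"
    then have "logpot W y \<le> logpot W x" using assms(1) by (simp add: is_max_point_def)
    with \<open>x \<in> W\<close> show "y \<in> W" by (auto simp: logpot_def split: if_splits)
  qed
  with assms(2,3) show False using finite_subset by auto
qed

lemma polyhedron_obtain_face_rel_interior:
  fixes P :: "'a::euclidean_space set"
  assumes "polyhedron P" and "x \<in> P"
  obtains F where "F face_of P" and "x \<in> rel_interior F"
proof -
  have "finite {F. F face_of P \<and> x \<in> F}"
    using finite_polyhedron_faces[OF assms(1)] by (rule finite_subset[rotated]) auto
  moreover have "P \<in> {F. F face_of P \<and> x \<in> F}"
    using assms polyhedron_imp_convex face_of_refl by auto
  ultimately obtain F where "is_arg_min aff_dim (\<lambda>F. F \<in> {F. F face_of P \<and> x \<in> F}) F"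
    using ex_is_arg_min_if_finite[of _ aff_dim] by blast
  then have F: "F face_of P" "x \<in> F"
    and min: "\<And>G. G face_of P \<Longrightarrow> x \<in> G \<Longrightarrow> \<not> aff_dim G < aff_dim F"
    unfolding is_arg_min_def by auto
  have "x \<in> rel_interior F"
  proof (rule ccontr)
    assume "x \<notin> rel_interior F"
    then have "x \<in> rel_frontier F" using F(2) closure_subset by (auto simp: rel_frontier_def)
    moreover have "polyhedron F" by (rule face_of_polyhedron_polyhedron[OF assms(1) F(1)])
    ultimately have "x \<in> \<Union> {G. G facet_of F}" by (simp add: rel_frontier_of_polyhedron)
    then obtain G where G: "G facet_of F" "x \<in> G" by blast
    then have "G face_of P" "aff_dim G < aff_dim F"
      using face_of_trans[OF facet_of_imp_face_of F(1)] by (auto simp: facet_of_def)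
    with min G(2) show False by blast
  qed
  with F(1) show thesis by (rule that)
qed

lemma logpot_max_point_in_frontier:
  fixes W \<Omega> :: "'a::euclidean_space set"
  assumes dim: "DIM('a) \<ge> 2" and W: "finite W" "W \<noteq> {}"
    and \<Omega>: "open \<Omega>" "\<Omega> \<noteq> {}" and max: "is_max_point (logpot W) (closure \<Omega>) x"
  shows "x \<in> frontier \<Omega>"
proof (rule ccontr)
  assume "x \<notin> frontier \<Omega>"
  then have "x \<in> \<Omega>" using max \<Omega>(1) by (simp add: is_max_point_def frontier_def interior_open)
  have int: "\<Omega> \<subseteq> interior (closure \<Omega>)" using \<Omega>(1) by (simp add: interior_maximal closure_subset)
  then have "infinite (closure \<Omega>)" using \<Omega>(2) empty_interior_finite by fastforce
  then have "x \<notin> W" by (rule is_max_point_logpot_notin[OF max W(1)])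
  moreover have "x \<in> rel_interior (closure \<Omega>)"
    using int interior_subset_rel_interior \<open>x \<in> \<Omega>\<close> by fast
  moreover have "aff_dim (closure \<Omega>) \<ge> 2" using dim \<Omega> by (simp add: aff_dim_open)
  ultimately obtain y where "y \<in> closure \<Omega>" "logpot W x < logpot W y"
    using logpot_increase_in_rel_interior[OF W] by blast
  then show False using max by (simp add: is_max_point_def not_le[symmetric])
qed

lemma logpot_max_point_convex_hull:
  fixes W :: "'a::euclidean_space set"
  assumes W: "finite W" "W \<noteq> {}" and int: "interior (convex hull W) \<noteq> {}"
    and max: "is_max_point (logpot W) (convex hull W) x"
  shows logpot_max_point_notin_rel_interior_face:
      "\<And>F. F face_of convex hull W \<Longrightarrow> aff_dim F \<ge> 2 \<Longrightarrow> x \<notin> rel_interior F"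
    and logpot_max_point_on_edge: "\<exists>E. E face_of convex hull W \<and> aff_dim E = 1 \<and> x \<in> E"
proof -
  have "infinite (convex hull W)" using int empty_interior_finite by blast
  then have xW: "x \<notin> W" by (rule is_max_point_logpot_notin[OF max W(1)])
  show no_face: "x \<notin> rel_interior F" if F: "F face_of convex hull W" "aff_dim F \<ge> 2" for F
  proof
    assume "x \<in> rel_interior F"
    then obtain y where "y \<in> F" "logpot W x < logpot W y"
      using logpot_increase_in_rel_interior[OF W xW _ F(2)] by blast
    then show False using max face_of_imp_subset[OF F(1)]
      by (auto simp: is_max_point_def not_le[symmetric])
  qed
  have "polyhedron (convex hull W)"
    using W(1) by (intro polytope_imp_polyhedron) (auto simp: polytope_def)
  moreover have "x \<in> convex hull W" using max by (simp add: is_max_point_def)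
  ultimately obtain F where F: "F face_of convex hull W" "x \<in> rel_interior F"
    by (rule polyhedron_obtain_face_rel_interior)
  have "x \<in> F" using F(2) rel_interior_subset by blast
  have "aff_dim F \<noteq> 0"
  proof
    assume "aff_dim F = 0"
    then have "F = {x}" using \<open>x \<in> F\<close> by (auto simp: aff_dim_eq_0)
    then have "x extreme_point_of convex hull W" using F(1) face_of_singleton by metis
    then show False using xW extreme_point_of_convex_hull by blast
  qed
  moreover have "aff_dim F \<ge> 0" using \<open>x \<in> F\<close> by (auto simp: not_less[symmetric] aff_dim_negative_iff)
  moreover have "\<not> aff_dim F \<ge> 2" using no_face[OF F(1)] F(2) by blast
  ultimately show "\<exists>E. E face_of convex hull W \<and> aff_dim E = 1 \<and> x \<in> E"
    using F(1) \<open>x \<in> F\<close> by (intro exI[of _ F]) auto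
qed

theorem theorem0p7:
  fixes W :: "'a::euclidean_space set"
  assumes dim: "DIM('a) \<ge> 2"
    and finW: "finite W" and neW: "W \<noteq> {}"
  shows
    "(\<forall>\<Omega>. bounded_domain \<Omega> \<and> (\<forall>w\<in>W. w \<notin> frontier \<Omega>) \<longrightarrow>
        (\<forall>x. is_max_point (logpot W) (closure \<Omega>) x \<longrightarrow> x \<in> frontier \<Omega>))
   \<and> (\<forall>\<Omega>. bounded_domain \<Omega> \<and> interior (convex hull W) \<noteq> {}
          \<and> closure \<Omega> = convex hull W \<longrightarrow>
        (\<forall>x. is_max_point (logpot W) (closure \<Omega>) x \<longrightarrow>
           (\<forall>F. F face_of (closure \<Omega>) \<and> aff_dim F \<ge> 2 \<longrightarrow> x \<notin> rel_interior F)
         \<and> (\<exists>E. E face_of (closure \<Omega>) \<and> aff_dim E = 1 \<and> x \<in> E)))"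
proof (rule conjI; intro allI impI)
  fix \<Omega> x
  assume "bounded_domain \<Omega> \<and> (\<forall>w\<in>W. w \<notin> frontier \<Omega>)"
    and "is_max_point (logpot W) (closure \<Omega>) x"
  then show "x \<in> frontier \<Omega>"
    using logpot_max_point_in_frontier[OF dim finW neW] by (simp add: bounded_domain_def)
next
  fix \<Omega> x
  assume "bounded_domain \<Omega> \<and> interior (convex hull W) \<noteq> {} \<and> closure \<Omega> = convex hull W"
    and "is_max_point (logpot W) (closure \<Omega>) x"
  then show "(\<forall>F. F face_of closure \<Omega> \<and> 2 \<le> aff_dim F \<longrightarrow> x \<notin> rel_interior F)
      \<and> (\<exists>E. E face_of closure \<Omega> \<and> aff_dim E = 1 \<and> x \<in> E)"
    using logpot_max_point_convex_hull[OF finW neW] by auto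
qed

end
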